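(* Let $q$ be a prime power, let $\Gamma$ be a projective bundle in $\mathrm{PG}(2,q)$, let $A$ be the binary point-line incidence matrix of $\mathrm{PG}(2,q)$ and $B$ the binary point-oval incidence matrix of $\Gamma$ (rows indexed by points in the same order), and let $H=(A\mid B)$. Then the maximum column intersection of $H$ equals $2$. Consequently, one round of the bit-flipping decoding algorithm with respect to $H$ corrects every error of Hamming weight at most $\lfloor\frac{q+1}{4}\rfloor$ in the code $C=\ker(H)=\{c\in\mathbb{F}_2^{2(q^2+q+1)}: cH^\top=0\}$; that is, for every $c\in C$ and $e$ with $\mathrm{wt}(e)\le\lfloor\frac{q+1}{4}\rfloor$, one round applied to $c+e$ outputs $c$.
   Context: $\mathrm{PG}(2,q)$ is the projective plane whose points and lines are the 1- and 2-dimensional subspaces of $\mathbb{F}_q^3$. An oval is a set of $q+1$ points such that every line meets it in at most two points. A projective bundle is a collection of $q^2+q+1$ ovals of $\mathrm{PG}(2,q)$ any two of which intersect in exactly one point. Incidence matrices have entry $1$ iff the point (row) lies on the line/oval (column). The maximum column intersection of a binary matrix is the maximum, over pairs of distinct columns, of the number of rows in which both columns have a $1$. $H$ has constant column weight $v=q+1$. One round of the bit-flipping algorithm on input $y$ for a binary matrix $H$ of constant column weight $v$: compute $s=Hy^\top$; for each column $j$ let $u_j$ be the number of rows $i$ with $H_{ij}=1$ and $s_i=1$; output $y$ with the bits in positions $\{j: u_j>v/2\}$ flipped. *)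

theory Defs
  imports Main "HOL-Library.Cardinality"
begin

text \<open>Vectors of F_q^3, with F_q the finite field 'a (q = CARD('a)).\<close>
type_synonym 'a vec3 = "'a \<times> 'a \<times> 'a"

definition sc :: "'a::field \<Rightarrow> 'a vec3 \<Rightarrow> 'a vec3" where
  "sc c v = (case v of (x, y, z) \<Rightarrow> (c * x, c * y, c * z))"

definition ad :: "'a::field vec3 \<Rightarrow> 'a vec3 \<Rightarrow> 'a vec3" where
  "ad v w = (case v of (x, y, z) \<Rightarrow> (case w of (x', y', z') \<Rightarrow> (x + x', y + y', z + z')))"

definition pg_points :: "('a::field) vec3 set set" where
  "pg_points = {{sc c v | c. True} | v. v \<noteq> (0, 0, 0)}"

definition pg_lines :: "('a::field) vec3 set set" where
  "pg_lines = {{ad (sc a u) (sc b w) | a b. True} | u w.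
      \<forall>a b. ad (sc a u) (sc b w) = (0, 0, 0) \<longrightarrow> a = 0 \<and> b = 0}"

text \<open>A point P lies on a line L iff P is a subspace of L.\<close>
definition is_oval :: "('a::{finite,field}) vec3 set set \<Rightarrow> bool" where
  "is_oval Ov \<longleftrightarrow> Ov \<subseteq> pg_points \<and> card Ov = CARD('a) + 1 \<and>
     (\<forall>L\<in>pg_lines. card {P \<in> Ov. P \<subseteq> L} \<le> 2)"

definition projective_bundle :: "('a::{finite,field}) vec3 set set set \<Rightarrow> bool" where
  "projective_bundle G \<longleftrightarrow> (\<forall>Ov\<in>G. is_oval Ov) \<and>
     card G = CARD('a)^2 + CARD('a) + 1 \<and>
     (\<forall>O1\<in>G. \<forall>O2\<in>G. O1 \<noteq> O2 \<longrightarrow> card (O1 \<inter> O2) = 1)"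

text \<open>Columns of H = (A | B): Inl L for lines, Inr O for ovals of the bundle.
  Entry of H at row P (a point) and column j.\<close>
definition H_entry :: "'a vec3 set \<Rightarrow> ('a vec3 set + 'a vec3 set set) \<Rightarrow> bool" where
  "H_entry P j = (case j of Inl L \<Rightarrow> P \<subseteq> L | Inr Ov \<Rightarrow> P \<in> Ov)"

definition H_cols :: "('a::field) vec3 set set set \<Rightarrow> ('a vec3 set + 'a vec3 set set) set" where
  "H_cols G = Inl ` pg_lines \<union> Inr ` G"

text \<open>Generic binary matrices: rows R, columns Cs, entries M i j (True = 1).
  Binary vectors indexed by Cs are represented by their supports (subsets of Cs).\<close>
definition max_col_intersection :: "'r set \<Rightarrow> 'c set \<Rightarrow> ('r \<Rightarrow> 'c \<Rightarrow> bool) \<Rightarrow> nat" where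
  "max_col_intersection R Cs M =
     Max {card {i \<in> R. M i j \<and> M i k} | j k. j \<in> Cs \<and> k \<in> Cs \<and> j \<noteq> k}"

definition syndrome :: "'c set \<Rightarrow> ('r \<Rightarrow> 'c \<Rightarrow> bool) \<Rightarrow> 'c set \<Rightarrow> 'r \<Rightarrow> bool" where
  "syndrome Cs M y i \<longleftrightarrow> odd (card {j \<in> Cs. M i j \<and> j \<in> y})"

definition in_kernel :: "'r set \<Rightarrow> 'c set \<Rightarrow> ('r \<Rightarrow> 'c \<Rightarrow> bool) \<Rightarrow> 'c set \<Rightarrow> bool" where
  "in_kernel R Cs M c \<longleftrightarrow> c \<subseteq> Cs \<and> (\<forall>i\<in>R. \<not> syndrome Cs M c i)"

definition sym_diff :: "'c set \<Rightarrow> 'c set \<Rightarrow> 'c set" where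
  "sym_diff A B = (A - B) \<union> (B - A)"

definition bf_round :: "'r set \<Rightarrow> 'c set \<Rightarrow> ('r \<Rightarrow> 'c \<Rightarrow> bool) \<Rightarrow> nat \<Rightarrow> 'c set \<Rightarrow> 'c set" where
  "bf_round R Cs M v y = sym_diff y
     {j \<in> Cs. 2 * card {i \<in> R. M i j \<and> syndrome Cs M y i} > v}"

end

theory Submission
  imports Defs
begin

text \<open>Two distinct lines share at most one point, a line meets an oval in at most two points, and
  two ovals of the bundle share exactly one point, so any two columns of \<open>H\<close> overlap in at most
  two rows; a secant of an oval attains two. For bit flipping with column weight \<open>v\<close> and overlaps
  at most \<open>\<lambda>\<close>, an unsatisfied check on a correct bit must contain an erroneous bit, so a correct
  bit sees at most \<open>\<lambda> t\<close> unsatisfied checks, while a satisfied check on an erroneous bit must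
  contain a second erroneous bit, so an erroneous bit sees at least \<open>v - \<lambda> (t - 1)\<close>. Hence
  \<open>2 \<lambda> t \<le> v\<close> separates the two, and here \<open>\<lambda> = 2\<close>, \<open>v = q + 1\<close>.\<close>

definition proj_point :: "'a::field vec3 \<Rightarrow> 'a vec3 set" where
  "proj_point v = {sc c v | c. True}"

definition span2 :: "'a::field vec3 \<Rightarrow> 'a vec3 \<Rightarrow> 'a vec3 set" where
  "span2 u w = {ad (sc a u) (sc b w) | a b. True}"

definition lin_indep2 :: "'a::field vec3 \<Rightarrow> 'a vec3 \<Rightarrow> bool" where
  "lin_indep2 u w \<longleftrightarrow> (\<forall>a b. ad (sc a u) (sc b w) = (0, 0, 0) \<longrightarrow> a = 0 \<and> b = 0)"

lemma sc_triple [simp]: "sc c (x, y, z) = (c * x, c * y, c * z)"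
  by (simp add: sc_def)

lemma ad_triple [simp]: "ad (x, y, z) (x', y', z') = (x + x', y + y', z + z')"
  by (simp add: ad_def)

lemma pg_points_eq: "pg_points = {proj_point v | v. v \<noteq> (0, 0, 0)}"
  by (simp add: pg_points_def proj_point_def)

lemma pg_lines_eq: "pg_lines = {span2 u w | u w. lin_indep2 u w}"
  by (simp add: pg_lines_def span2_def lin_indep2_def)

lemma proj_point_self: "v \<in> proj_point v"
proof -
  have "v = sc 1 v" by (cases v) simp
  then show ?thesis unfolding proj_point_def by blast
qed

lemma left_in_span2: "u \<in> span2 u w"
proof -
  have "u = ad (sc 1 u) (sc 0 w)" by (cases u; cases w) simp
  then show ?thesis unfolding span2_def by blast
qed

lemma right_in_span2: "w \<in> span2 u w"
proof -
  have "w = ad (sc 0 u) (sc 1 w)" by (cases u; cases w) simp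
  then show ?thesis unfolding span2_def by blast
qed

lemma span2_lin_comb:
  assumes "x \<in> span2 u w" and "y \<in> span2 u w"
  shows "ad (sc c x) (sc d y) \<in> span2 u w"
proof -
  obtain a1 b1 a2 b2 where "x = ad (sc a1 u) (sc b1 w)" and "y = ad (sc a2 u) (sc b2 w)"
    using assms by (auto simp: span2_def)
  then have "ad (sc c x) (sc d y) = ad (sc (c * a1 + d * a2) u) (sc (c * b1 + d * b2) w)"
    by (cases u; cases w) (simp add: algebra_simps)
  then show ?thesis unfolding span2_def by blast
qed

lemma span2_subset:
  assumes "x \<in> span2 u w" and "y \<in> span2 u w"
  shows "span2 x y \<subseteq> span2 u w"
proof
  fix z assume "z \<in> span2 x y"
  then obtain c d where "z = ad (sc c x) (sc d y)" by (auto simp: span2_def)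
  with span2_lin_comb[OF assms] show "z \<in> span2 u w" by simp
qed

lemma proj_point_subset_span2:
  assumes "v \<in> span2 u w"
  shows "proj_point v \<subseteq> span2 u w"
proof
  fix z assume "z \<in> proj_point v"
  then obtain c where "z = sc c v" by (auto simp: proj_point_def)
  then have "z = ad (sc c v) (sc 0 v)" by (cases v) simp
  then show "z \<in> span2 u w" using span2_lin_comb[OF assms assms] by simp
qed

lemma lin_indep2_nonzero:
  assumes "lin_indep2 u w"
  shows "u \<noteq> (0, 0, 0)"
proof
  assume "u = (0, 0, 0)"
  then have "ad (sc 1 u) (sc 0 w) = (0, 0, 0)" by (cases w) simp
  with assms have "(1::'a) = 0" unfolding lin_indep2_def by blast
  then show False by simp
qed

lemma proj_point_eq:
  assumes "x \<noteq> (0, 0, 0)" and "x \<in> proj_point y"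
  shows "proj_point x = proj_point y"
proof -
  obtain k where k: "x = sc k y" using assms(2) by (auto simp: proj_point_def)
  with assms(1) have "k \<noteq> 0" by (cases y) auto
  have "sc c x = sc (c * k) y" for c using k by (cases y) simp
  moreover have "sc c y = sc (c / k) x" for c using k \<open>k \<noteq> 0\<close> by (cases y) simp
  ultimately show ?thesis unfolding proj_point_def by metis
qed

lemma lin_indep2_if_distinct_points:
  assumes "x \<noteq> (0, 0, 0)" and "y \<noteq> (0, 0, 0)" and "proj_point x \<noteq> proj_point y"
  shows "lin_indep2 x y"
  unfolding lin_indep2_def
proof (intro allI impI)
  fix a b assume comb: "ad (sc a x) (sc b y) = (0, 0, 0)"
  show "a = 0 \<and> b = 0"
  proof (cases "a = 0")
    case True
    with comb assms(2) show ?thesis by (cases x; cases y) auto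
  next
    case False
    with comb have "x = sc (- b / a) y" by (cases x; cases y) (simp add: field_simps add_eq_0_iff)
    then have "x \<in> proj_point y" by (auto simp: proj_point_def)
    with assms show ?thesis using proj_point_eq by blast
  qed
qed

lemma in_span2_if_scaled:
  assumes "sc d u = ad (sc a x) (sc b y)" and "d \<noteq> 0"
  shows "u \<in> span2 x y"
proof -
  from assms have "u = ad (sc (a / d) x) (sc (b / d) y)"
    by (cases u; cases x; cases y) (simp add: field_simps)
  then show ?thesis unfolding span2_def by blast
qed

text \<open>Cramer's rule: \<open>b\<^sub>2 x - b\<^sub>1 y\<close> and \<open>a\<^sub>1 y - a\<^sub>2 x\<close> are the multiples of \<open>u\<close> and \<open>w\<close> by the
  determinant \<open>a\<^sub>1 b\<^sub>2 - a\<^sub>2 b\<^sub>1\<close> of the coordinates of \<open>x, y\<close>, which independence keeps nonzero.\<close>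
lemma span2_basis_change:
  assumes "x \<in> span2 u w" and "y \<in> span2 u w" and indep: "lin_indep2 x y"
  shows "u \<in> span2 x y" and "w \<in> span2 x y"
proof -
  obtain a1 b1 a2 b2 where x: "x = ad (sc a1 u) (sc b1 w)" and y: "y = ad (sc a2 u) (sc b2 w)"
    using assms by (auto simp: span2_def)
  define D where "D = a1 * b2 - a2 * b1"
  have u: "sc D u = ad (sc b2 x) (sc (- b1) y)" and w: "sc D w = ad (sc (- a2) x) (sc a1 y)"
    unfolding x y D_def by (cases u; cases w; simp add: algebra_simps)+
  have "D \<noteq> 0"
  proof
    assume "D = 0"
    with u w have "ad (sc b2 x) (sc (- b1) y) = (0, 0, 0)" "ad (sc (- a2) x) (sc a1 y) = (0, 0, 0)"
      by (cases u; cases w; simp)+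
    with indep have "- b1 = 0" "a1 = 0" unfolding lin_indep2_def by blast+
    then have "a1 = 0" "b1 = 0" by simp_all
    with x have "x = (0, 0, 0)" by (cases u; cases w) simp
    with indep show False using lin_indep2_nonzero by blast
  qed
  with u w show "u \<in> span2 x y" and "w \<in> span2 x y" by (auto intro: in_span2_if_scaled)
qed

lemma span2_eq_if_lin_indep2:
  assumes "x \<in> span2 u w" and "y \<in> span2 u w" and "lin_indep2 x y"
  shows "span2 u w = span2 x y"
  using span2_subset span2_basis_change[OF assms] span2_subset[OF assms(1,2)] by blast

lemma pg_pointE:
  assumes "P \<in> pg_points"
  obtains x where "x \<noteq> (0, 0, 0)" and "P = proj_point x"
  using assms by (auto simp: pg_points_eq)

lemma pg_line_through:
  assumes "P \<in> pg_points" and "Q \<in> pg_points" and "P \<noteq> Q"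
  shows "\<exists>L\<in>pg_lines. P \<subseteq> L \<and> Q \<subseteq> L"
proof -
  obtain x y where "x \<noteq> (0, 0, 0)" "P = proj_point x" "y \<noteq> (0, 0, 0)" "Q = proj_point y"
    using assms(1,2) by (metis pg_pointE)
  with assms(3) have "lin_indep2 x y" by (simp add: lin_indep2_if_distinct_points)
  then have "span2 x y \<in> pg_lines" unfolding pg_lines_eq by blast
  moreover have "P \<subseteq> span2 x y" "Q \<subseteq> span2 x y"
    unfolding \<open>P = proj_point x\<close> \<open>Q = proj_point y\<close>
    by (simp_all add: proj_point_subset_span2 left_in_span2 right_in_span2)
  ultimately show ?thesis by blast
qed

lemma pg_line_unique:
  assumes "P \<in> pg_points" and "Q \<in> pg_points" and "P \<noteq> Q"
    and "L1 \<in> pg_lines" and "P \<subseteq> L1" and "Q \<subseteq> L1"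
    and "L2 \<in> pg_lines" and "P \<subseteq> L2" and "Q \<subseteq> L2"
  shows "L1 = L2"
proof -
  obtain x y where "x \<noteq> (0, 0, 0)" "P = proj_point x" "y \<noteq> (0, 0, 0)" "Q = proj_point y"
    using assms(1,2) by (metis pg_pointE)
  with assms(3) have indep: "lin_indep2 x y" by (simp add: lin_indep2_if_distinct_points)
  have "L = span2 x y" if "L \<in> pg_lines" "P \<subseteq> L" "Q \<subseteq> L" for L
  proof -
    obtain u w where "L = span2 u w" using \<open>L \<in> pg_lines\<close> by (auto simp: pg_lines_eq)
    moreover have "x \<in> L" "y \<in> L"
      using that \<open>P = proj_point x\<close> \<open>Q = proj_point y\<close> proj_point_self by blast+
    ultimately show ?thesis using span2_eq_if_lin_indep2 indep by blast
  qed
  with assms(4-9) show ?thesis by blast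
qed

lemma card_common_points_le_1:
  fixes L1 L2 :: "'a::{finite,field} vec3 set"
  assumes "L1 \<in> pg_lines" and "L2 \<in> pg_lines" and "L1 \<noteq> L2"
  shows "card {P \<in> pg_points. P \<subseteq> L1 \<and> P \<subseteq> L2} \<le> 1"
  using pg_line_unique[OF _ _ _ assms(1) _ _ assms(2)] assms(3)
  by (auto simp: card_le_Suc0_iff_eq)

lemma card_points_on_line_ge:
  fixes L :: "'a::{finite,field} vec3 set"
  assumes "L \<in> pg_lines"
  shows "CARD('a) + 1 \<le> card {P \<in> pg_points. P \<subseteq> L}"
proof -
  obtain u w where L: "L = span2 u w" and indep: "lin_indep2 u w"
    using assms by (auto simp: pg_lines_eq)
  define f where "f t = proj_point (ad w (sc t u))" for t
  have comb: "ad w (sc t u) = ad (sc t u) (sc 1 w)" for t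
    by (cases u; cases w) (simp add: add.commute)
  have nonzero: "ad w (sc t u) \<noteq> (0, 0, 0)" for t
  proof
    assume "ad w (sc t u) = (0, 0, 0)"
    with indep have "(1::'a) = 0" unfolding comb lin_indep2_def by blast
    then show False by simp
  qed
  have "inj f"
  proof
    fix s t assume "f s = f t"
    then have "ad w (sc s u) \<in> proj_point (ad w (sc t u))"
      using proj_point_self[of "ad w (sc s u)"] by (simp add: f_def)
    then obtain k where "ad w (sc s u) = sc k (ad w (sc t u))" by (auto simp: proj_point_def)
    then have "ad (sc (s - k * t) u) (sc (1 - k) w) = (0, 0, 0)"
      by (cases u; cases w) (simp add: algebra_simps)
    with indep have "s - k * t = 0 \<and> 1 - k = 0" unfolding lin_indep2_def by blast
    then show "s = t" by simp
  qed
  have "proj_point u \<notin> range f"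
  proof
    assume "proj_point u \<in> range f"
    then obtain t where "proj_point u = f t" by blast
    then have "ad w (sc t u) \<in> proj_point u"
      using proj_point_self[of "ad w (sc t u)"] by (simp add: f_def)
    then obtain k where "ad w (sc t u) = sc k u" by (auto simp: proj_point_def)
    then have "ad (sc (t - k) u) (sc 1 w) = (0, 0, 0)"
      by (cases u; cases w) (simp add: algebra_simps)
    with indep have "(1::'a) = 0" unfolding lin_indep2_def by blast
    then show False by simp
  qed
  have "insert (proj_point u) (range f) \<subseteq> {P \<in> pg_points. P \<subseteq> L}"
  proof -
    have "proj_point u \<in> pg_points"
      using lin_indep2_nonzero[OF indep] unfolding pg_points_eq by blast
    moreover have "proj_point u \<subseteq> L"
      unfolding L by (rule proj_point_subset_span2[OF left_in_span2])
    moreover have "f t \<in> pg_points" for t using nonzero unfolding pg_points_eq f_def by blast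
    moreover have "f t \<subseteq> L" for t
      unfolding f_def L comb by (rule proj_point_subset_span2) (unfold span2_def, blast)
    ultimately show ?thesis by blast
  qed
  then have "card (insert (proj_point u) (range f)) \<le> card {P \<in> pg_points. P \<subseteq> L}"
    by (rule card_mono[rotated]) simp
  moreover have "card (insert (proj_point u) (range f)) = CARD('a) + 1"
    using \<open>inj f\<close> \<open>proj_point u \<notin> range f\<close> by (simp add: card_image)
  ultimately show ?thesis by simp
qed

lemma card_sym_diff:
  assumes "finite A" and "finite B"
  shows "card (sym_diff A B) + 2 * card (A \<inter> B) = card A + card B"
proof -
  have "sym_diff A B = (A \<union> B) - (A \<inter> B)" by (auto simp: sym_diff_def)
  also have "card ((A \<union> B) - (A \<inter> B)) = card (A \<union> B) - card (A \<inter> B)"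
    by (rule card_Diff_subset) (use assms in auto)
  moreover have "card (A \<inter> B) \<le> card (A \<union> B)" using assms by (intro card_mono) auto
  ultimately show ?thesis using card_Un_Int[OF assms] by simp
qed

lemma syndrome_sym_diff:
  assumes "finite Cs"
  shows "syndrome Cs M (sym_diff c e) i \<longleftrightarrow> syndrome Cs M c i \<noteq> syndrome Cs M e i"
proof -
  let ?S = "\<lambda>y. {j \<in> Cs. M i j \<and> j \<in> y}"
  have "?S (sym_diff c e) = sym_diff (?S c) (?S e)" by (auto simp: sym_diff_def)
  then have "card (?S (sym_diff c e)) + 2 * card (?S c \<inter> ?S e) = card (?S c) + card (?S e)"
    using card_sym_diff[of "?S c" "?S e"] assms by simp
  then show ?thesis unfolding syndrome_def by presburger
qed

lemma card_UN_col_overlaps_le: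
  assumes "finite K" and "K \<subseteq> Cs" and "j \<in> Cs" and "j \<notin> K"
    and overlap: "\<forall>j\<in>Cs. \<forall>k\<in>Cs. j \<noteq> k \<longrightarrow> card {i \<in> R. M i j \<and> M i k} \<le> lam"
  shows "card (\<Union>k\<in>K. {i \<in> R. M i j \<and> M i k}) \<le> lam * card K"
proof -
  have "card (\<Union>k\<in>K. {i \<in> R. M i j \<and> M i k}) \<le> (\<Sum>k\<in>K. card {i \<in> R. M i j \<and> M i k})"
    using assms(1) by (rule card_UN_le)
  also have "\<dots> \<le> (\<Sum>k\<in>K. lam)"
  proof (rule sum_mono)
    fix k assume "k \<in> K"
    with assms(2,4) have "k \<in> Cs" "j \<noteq> k" by auto
    with overlap \<open>j \<in> Cs\<close> show "card {i \<in> R. M i j \<and> M i k} \<le> lam" by blast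
  qed
  finally show ?thesis by (simp add: mult.commute)
qed

lemma card_unsat_checks_correct_bit:
  assumes "finite R" and "finite e" and "e \<subseteq> Cs" and "j \<in> Cs" and "j \<notin> e"
    and overlap: "\<forall>j\<in>Cs. \<forall>k\<in>Cs. j \<noteq> k \<longrightarrow> card {i \<in> R. M i j \<and> M i k} \<le> lam"
  shows "card {i \<in> R. M i j \<and> syndrome Cs M e i} \<le> lam * card e"
proof -
  have "{i \<in> R. M i j \<and> syndrome Cs M e i} \<subseteq> (\<Union>k\<in>e. {i \<in> R. M i j \<and> M i k})"
  proof
    fix i assume i: "i \<in> {i \<in> R. M i j \<and> syndrome Cs M e i}"
    then have "odd (card {k \<in> Cs. M i k \<and> k \<in> e})" by (simp add: syndrome_def)
    then have "{k \<in> Cs. M i k \<and> k \<in> e} \<noteq> {}" by (intro notI) simp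
    with i show "i \<in> (\<Union>k\<in>e. {i \<in> R. M i j \<and> M i k})" by blast
  qed
  then have "card {i \<in> R. M i j \<and> syndrome Cs M e i} \<le> card (\<Union>k\<in>e. {i \<in> R. M i j \<and> M i k})"
    by (rule card_mono[rotated]) (rule finite_subset[OF _ assms(1)], blast)
  also have "\<dots> \<le> lam * card e"
    using assms by (intro card_UN_col_overlaps_le) auto
  finally show ?thesis .
qed

lemma card_col_le_unsat_checks_wrong_bit:
  assumes "finite R" and "finite e" and "e \<subseteq> Cs" and "j \<in> e"
    and overlap: "\<forall>j\<in>Cs. \<forall>k\<in>Cs. j \<noteq> k \<longrightarrow> card {i \<in> R. M i j \<and> M i k} \<le> lam"
  shows "card {i \<in> R. M i j} \<le> card {i \<in> R. M i j \<and> syndrome Cs M e i} + lam * (card e - 1)"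
proof -
  let ?U = "{i \<in> R. M i j \<and> syndrome Cs M e i}"
  let ?V = "\<Union>k\<in>e - {j}. {i \<in> R. M i j \<and> M i k}"
  have "{i \<in> R. M i j} \<subseteq> ?U \<union> ?V"
  proof
    fix i assume i: "i \<in> {i \<in> R. M i j}"
    show "i \<in> ?U \<union> ?V"
    proof (cases "syndrome Cs M e i")
      case True
      with i show ?thesis by blast
    next
      case False
      then have "{k \<in> Cs. M i k \<and> k \<in> e} \<noteq> {j}" by (auto simp: syndrome_def)
      moreover have "j \<in> {k \<in> Cs. M i k \<and> k \<in> e}" using i assms(3,4) by auto
      ultimately obtain k where "k \<in> e - {j}" "M i k" by blast
      with i show ?thesis by blast
    qed
  qed
  then have "card {i \<in> R. M i j} \<le> card (?U \<union> ?V)"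
    by (rule card_mono[rotated]) (rule finite_subset[OF _ assms(1)], blast)
  also have "\<dots> \<le> card ?U + card ?V" by (rule card_Un_le)
  also have "card ?V \<le> lam * card (e - {j})"
    using assms by (intro card_UN_col_overlaps_le) auto
  finally show ?thesis using assms(2,4) by simp
qed

lemma bf_round_corrects_errors:
  fixes R :: "'r set" and Cs :: "'c set" and lam v :: nat
  assumes "finite R" and "finite Cs"
    and weight: "\<forall>j\<in>Cs. v \<le> card {i \<in> R. M i j}"
    and overlap: "\<forall>j\<in>Cs. \<forall>k\<in>Cs. j \<noteq> k \<longrightarrow> card {i \<in> R. M i j \<and> M i k} \<le> lam"
    and "0 < lam" and few: "2 * lam * card e \<le> v"
    and codeword: "in_kernel R Cs M c" and "e \<subseteq> Cs"
  shows "bf_round R Cs M v (sym_diff c e) = c"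
proof -
  have "finite e" using \<open>e \<subseteq> Cs\<close> \<open>finite Cs\<close> by (rule finite_subset)
  let ?unsat = "\<lambda>j. card {i \<in> R. M i j \<and> syndrome Cs M e i}"
  have synd: "{i \<in> R. M i j \<and> syndrome Cs M (sym_diff c e) i}
      = {i \<in> R. M i j \<and> syndrome Cs M e i}" for j
    using codeword unfolding in_kernel_def by (auto simp: syndrome_sym_diff[OF \<open>finite Cs\<close>])
  have "v < 2 * ?unsat j" if j: "j \<in> e" for j
  proof -
    obtain n where n: "card e = Suc n" using j \<open>finite e\<close> by (metis card_Suc_Diff1)
    have "v \<le> card {i \<in> R. M i j}" using weight j \<open>e \<subseteq> Cs\<close> by blast
    also have "\<dots> \<le> ?unsat j + lam * n"
      using card_col_le_unsat_checks_wrong_bit[OF \<open>finite R\<close> \<open>finite e\<close> \<open>e \<subseteq> Cs\<close> j overlap] n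
      by simp
    finally have "v \<le> ?unsat j + lam * n" .
    with few \<open>0 < lam\<close> show ?thesis unfolding n by simp
  qed
  moreover have "2 * ?unsat j \<le> v" if "j \<in> Cs" "j \<notin> e" for j
    using card_unsat_checks_correct_bit[OF \<open>finite R\<close> \<open>finite e\<close> \<open>e \<subseteq> Cs\<close> that overlap] few
    by simp
  ultimately have "{j \<in> Cs. v < 2 * ?unsat j} = e" using \<open>e \<subseteq> Cs\<close> by force
  then show ?thesis unfolding bf_round_def synd by (auto simp: sym_diff_def)
qed

lemma max_col_intersection_eqI:
  assumes bound: "\<forall>j\<in>Cs. \<forall>k\<in>Cs. j \<noteq> k \<longrightarrow> card {i \<in> R. M i j \<and> M i k} \<le> m"
    and "j \<in> Cs" and "k \<in> Cs" and "j \<noteq> k" and "card {i \<in> R. M i j \<and> M i k} = m"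
  shows "max_col_intersection R Cs M = m"
proof -
  let ?S = "{card {i \<in> R. M i j \<and> M i k} | j k. j \<in> Cs \<and> k \<in> Cs \<and> j \<noteq> k}"
  have le: "s \<le> m" if "s \<in> ?S" for s using that bound by blast
  then have "finite ?S" by (meson finite_atMost finite_subset subsetI atMost_iff)
  moreover have "m \<in> ?S" using assms(2-5) by blast
  ultimately show ?thesis unfolding max_col_intersection_def using le by (intro Max_eqI) auto
qed

lemma H_entry_Inl [simp]: "H_entry P (Inl L) \<longleftrightarrow> P \<subseteq> L"
  by (simp add: H_entry_def)

lemma H_entry_Inr [simp]: "H_entry P (Inr Ov) \<longleftrightarrow> P \<in> Ov"
  by (simp add: H_entry_def)

lemma H_col_overlap_le_2:
  fixes G :: "'a::{finite,field} vec3 set set set"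
  assumes G: "projective_bundle G" and "j \<in> H_cols G" and "k \<in> H_cols G" and "j \<noteq> k"
  shows "card {P \<in> pg_points. H_entry P j \<and> H_entry P k} \<le> 2"
proof -
  have oval: "is_oval Ov" if "Ov \<in> G" for Ov using G that by (simp add: projective_bundle_def)
  have line_oval: "card {P \<in> pg_points. P \<subseteq> L \<and> P \<in> Ov} \<le> 2" if "L \<in> pg_lines" "Ov \<in> G" for L Ov
  proof -
    have "{P \<in> pg_points. P \<subseteq> L \<and> P \<in> Ov} = {P \<in> Ov. P \<subseteq> L}"
      using oval[OF that(2)] by (auto simp: is_oval_def)
    with oval[OF that(2)] that(1) show ?thesis by (simp add: is_oval_def)
  qed
  show ?thesis
  proof (cases j; cases k)
    fix L1 L2 assume "j = Inl L1" "k = Inl L2"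
    with assms(2-4) show ?thesis
      using card_common_points_le_1[of L1 L2] by (auto simp: H_cols_def)
  next
    fix L Ov assume "j = Inl L" "k = Inr Ov"
    with assms(2,3) show ?thesis using line_oval[of L Ov] by (auto simp: H_cols_def)
  next
    fix Ov L assume "j = Inr Ov" "k = Inl L"
    with assms(2,3) show ?thesis using line_oval[of L Ov] by (auto simp: H_cols_def conj_commute)
  next
    fix O1 O2 assume "j = Inr O1" "k = Inr O2"
    with assms(2-4) have "O1 \<in> G" "O2 \<in> G" "O1 \<noteq> O2" by (auto simp: H_cols_def)
    moreover have "{P \<in> pg_points. P \<in> O1 \<and> P \<in> O2} = O1 \<inter> O2"
      using oval[OF \<open>O1 \<in> G\<close>] by (auto simp: is_oval_def)
    ultimately show ?thesis using G \<open>j = Inr O1\<close> \<open>k = Inr O2\<close>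
      by (simp add: projective_bundle_def)
  qed
qed

lemma H_col_weight_ge:
  fixes G :: "'a::{finite,field} vec3 set set set"
  assumes "projective_bundle G" and "j \<in> H_cols G"
  shows "CARD('a) + 1 \<le> card {P \<in> pg_points. H_entry P j}"
proof (cases j)
  case (Inl L)
  with assms(2) show ?thesis using card_points_on_line_ge[of L] by (auto simp: H_cols_def)
next
  case (Inr Ov)
  with assms have "is_oval Ov" by (auto simp: H_cols_def projective_bundle_def)
  moreover from this have "{P \<in> pg_points. H_entry P j} = Ov"
    using Inr by (auto simp: is_oval_def)
  ultimately show ?thesis by (simp add: is_oval_def)
qed

lemma H_col_overlap_eq_2_exists:
  fixes G :: "'a::{finite,field} vec3 set set set"
  assumes "projective_bundle G"
  obtains j k where "j \<in> H_cols G" and "k \<in> H_cols G" and "j \<noteq> k"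
    and "card {P \<in> pg_points. H_entry P j \<and> H_entry P k} = 2"
proof -
  obtain Ov where "Ov \<in> G" using assms by (fastforce simp: projective_bundle_def)
  with assms have oval: "is_oval Ov" by (simp add: projective_bundle_def)
  then have "2 \<le> card Ov" by (simp add: is_oval_def Suc_leI)
  then obtain S where "S \<subseteq> Ov" "card S = 2" by (metis obtain_subset_with_card_n)
  then obtain P Q where "P \<in> Ov" "Q \<in> Ov" "P \<noteq> Q" by (auto simp: card_2_iff)
  moreover have "Ov \<subseteq> pg_points" using oval by (simp add: is_oval_def)
  ultimately obtain L where "L \<in> pg_lines" "P \<subseteq> L" "Q \<subseteq> L" by (meson pg_line_through subsetD)
  have secant: "{R \<in> pg_points. H_entry R (Inl L) \<and> H_entry R (Inr Ov)} = {R \<in> Ov. R \<subseteq> L}"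
    using \<open>Ov \<subseteq> pg_points\<close> by auto
  have "card {R \<in> Ov. R \<subseteq> L} \<le> 2" using oval \<open>L \<in> pg_lines\<close> by (simp add: is_oval_def)
  moreover have "card {P, Q} \<le> card {R \<in> Ov. R \<subseteq> L}"
    using \<open>P \<in> Ov\<close> \<open>Q \<in> Ov\<close> \<open>P \<subseteq> L\<close> \<open>Q \<subseteq> L\<close> by (intro card_mono) auto
  ultimately have "card {R \<in> pg_points. H_entry R (Inl L) \<and> H_entry R (Inr Ov)} = 2"
    unfolding secant using \<open>P \<noteq> Q\<close> by simp
  moreover have "Inl L \<in> H_cols G" "Inr Ov \<in> H_cols G"
    using \<open>L \<in> pg_lines\<close> \<open>Ov \<in> G\<close> by (auto simp: H_cols_def)
  ultimately show ?thesis using that[of "Inl L" "Inr Ov"] by simp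
qed

theorem proposition4p14:
  fixes G :: "('a::{finite,field}) vec3 set set set"
  assumes "projective_bundle G"
  shows "max_col_intersection pg_points (H_cols G) H_entry = 2 \<and>
    (\<forall>c e. in_kernel pg_points (H_cols G) H_entry c \<longrightarrow> e \<subseteq> H_cols G \<longrightarrow>
       card e \<le> (CARD('a) + 1) div 4 \<longrightarrow>
       bf_round pg_points (H_cols G) H_entry (CARD('a) + 1) (sym_diff c e) = c)"
proof (intro conjI allI impI)
  obtain j k where "j \<in> H_cols G" "k \<in> H_cols G" "j \<noteq> k"
    "card {P \<in> pg_points. H_entry P j \<and> H_entry P k} = 2"
    using H_col_overlap_eq_2_exists[OF assms] .
  then show "max_col_intersection pg_points (H_cols G) H_entry = 2"
    using H_col_overlap_le_2[OF assms] by (intro max_col_intersection_eqI) auto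
next
  fix c e
  assume "in_kernel pg_points (H_cols G) H_entry c" and "e \<subseteq> H_cols G"
    and "card e \<le> (CARD('a) + 1) div 4"
  then show "bf_round pg_points (H_cols G) H_entry (CARD('a) + 1) (sym_diff c e) = c"
    using H_col_weight_ge[OF assms] H_col_overlap_le_2[OF assms]
    by (intro bf_round_corrects_errors[where lam = 2]) auto
qed

end
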